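(* Let $q\in\mathcal Q_0$ and assume that $\pi(B^\complement_{r,0})>0$ for all $r>0$, and that for every $\delta>0$ there exists $v>0$ with $\sup_{\theta\in B^\complement_{v,0}}h(\theta)<\delta$. Then $P_{2,N}$ is not variance bounding, for every $N\in\mathbb N$.
   Context: Let $\Theta$ and $\mathsf Y$ be metric spaces; $B_{r,z}$ is the ball of radius $r$ about $z$, $B^\complement$ its complement, $0$ a fixed reference point in $\Theta$. Densities on $\Theta$ are w.r.t. a common dominating measure. Fix data $y\in\mathsf Y$, $\epsilon>0$, a prior density $p$ (possibly improper), likelihood densities $f_\theta$ on $\mathsf Y$; $h(\theta)=f_\theta(B_{\epsilon,y})$, $w(x)=I(y\in B_{\epsilon,x})$, $H=\int ph\in(0,\infty)$, $\pi=ph/H$. Let $q(\theta,\cdot)$ be a proposal density and $c(\theta,\vartheta)=p(\theta)q(\theta,\vartheta)$. $P_{2,N}$ is the kernel $P(\theta,\mathrm d\vartheta)=q(\theta,\mathrm d\vartheta)\alpha(\theta,\vartheta)+\{1-\int q(\theta,\mathrm d\theta')\alpha(\theta,\theta')\}\delta_\theta(\mathrm d\vartheta)$ with $\alpha_{2,N}(\theta,\vartheta)=\int\int[1\wedge\frac{c(\vartheta,\theta)\sum_{j=1}^N w(z_j)}{c(\theta,\vartheta)\{1+\sum_{j=1}^{N-1}w(x_j)\}}]f_\theta^{\otimes N-1}(\mathrm dx_{1:N-1})f_\vartheta^{\otimes N}(\mathrm dz_{1:N})$; it is $\pi$-reversible. A reversible kernel is variance bounding if $\sup\sigma_0(P)<1$,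 $\sigma_0(P)$ its spectrum on $L^2_0(\pi)$. $\mathcal Q_0$ is the set of proposals $q$ such that for all $\delta>0$ and $r>0$ there exists $R>0$ with $q(\theta,B_{r,0})<\delta$ for all $\theta\in B^\complement_{R,0}$ (e.g. autoregressive proposals $q(\theta,\vartheta)=\mathcal N(\vartheta;\rho\theta,\sigma^2)$, $\rho\in(0,1)$). *)

theory Defs
  imports "HOL-Probability.Probability"
begin

text \<open>L^2_0(M): square-integrable, measurable real functions with mean zero
  (elements are functions; equality in L^2 is almost-everywhere equality).\<close>
definition L2_0 :: "'a measure \<Rightarrow> ('a \<Rightarrow> real) set" where
  "L2_0 M = {f \<in> borel_measurable M. integrable M (\<lambda>x. (f x)\<^sup>2) \<and> integral\<^sup>L M f = 0}"

text \<open>Spectrum of the (bounded, self-adjoint) operator T on L^2_0(M):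
  the real numbers l such that T - l I is not a bijection of L^2_0(M)
  (modulo a.e. equality). For bounded operators bijectivity implies a bounded
  inverse (open mapping theorem); for self-adjoint operators the spectrum is real.\<close>
definition spectrum0 :: "'a measure \<Rightarrow> (('a \<Rightarrow> real) \<Rightarrow> 'a \<Rightarrow> real) \<Rightarrow> real set" where
  "spectrum0 M T = {l. \<not> ((\<forall>g\<in>L2_0 M. \<exists>f\<in>L2_0 M. AE x in M. T f x - l * f x = g x)
                         \<and> (\<forall>f\<in>L2_0 M. (AE x in M. T f x = l * f x) \<longrightarrow> (AE x in M. f x = 0)))}"

definition variance_bounding :: "'a measure \<Rightarrow> (('a \<Rightarrow> real) \<Rightarrow> 'a \<Rightarrow> real) \<Rightarrow> bool" where
  "variance_bounding M T \<longleftrightarrow> (\<exists>c<1. \<forall>l\<in>spectrum0 M T. l \<le> c)"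

definition wfun :: "'b::metric_space \<Rightarrow> real \<Rightarrow> 'b \<Rightarrow> real" where
  "wfun y \<epsilon> x = indicator (ball x \<epsilon>) y"

definition hfun :: "'b measure \<Rightarrow> ('a \<Rightarrow> 'b \<Rightarrow> real) \<Rightarrow> 'b::metric_space \<Rightarrow> real \<Rightarrow> 'a \<Rightarrow> real" where
  "hfun \<nu> f y \<epsilon> \<theta> = enn2real (\<integral>\<^sup>+ x \<in> ball y \<epsilon>. ennreal (f \<theta> x) \<partial>\<nu>)"

definition Hconst :: "'a measure \<Rightarrow> ('a \<Rightarrow> real) \<Rightarrow> 'b measure \<Rightarrow> ('a \<Rightarrow> 'b \<Rightarrow> real) \<Rightarrow> 'b::metric_space \<Rightarrow> real \<Rightarrow> ennreal" where
  "Hconst \<mu> p \<nu> f y \<epsilon> = (\<integral>\<^sup>+ \<theta>. ennreal (p \<theta> * hfun \<nu> f y \<epsilon> \<theta>) \<partial>\<mu>)"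

definition post :: "'a measure \<Rightarrow> ('a \<Rightarrow> real) \<Rightarrow> 'b measure \<Rightarrow> ('a \<Rightarrow> 'b \<Rightarrow> real) \<Rightarrow> 'b::metric_space \<Rightarrow> real \<Rightarrow> 'a measure" where
  "post \<mu> p \<nu> f y \<epsilon> = density \<mu> (\<lambda>\<theta>. ennreal (p \<theta> * hfun \<nu> f y \<epsilon> \<theta> / enn2real (Hconst \<mu> p \<nu> f y \<epsilon>)))"

definition cfun :: "('a \<Rightarrow> real) \<Rightarrow> ('a \<Rightarrow> 'a \<Rightarrow> real) \<Rightarrow> 'a \<Rightarrow> 'a \<Rightarrow> real" where
  "cfun p q \<theta> t = p \<theta> * q \<theta> t"

text \<open>alpha_{2,N}(theta, theta'): x_{1:N-1} iid f_theta, z_{1:N} iid f_theta'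
  (indices shifted to start at 0).\<close>
definition alpha2N :: "'b measure \<Rightarrow> ('a \<Rightarrow> 'b \<Rightarrow> real) \<Rightarrow> ('a \<Rightarrow> real) \<Rightarrow> ('a \<Rightarrow> 'a \<Rightarrow> real)
      \<Rightarrow> 'b::metric_space \<Rightarrow> real \<Rightarrow> nat \<Rightarrow> 'a \<Rightarrow> 'a \<Rightarrow> real" where
  "alpha2N \<nu> f p q y \<epsilon> N \<theta> t =
     (\<integral> xs. (\<integral> zs. min 1 ((cfun p q t \<theta> * (\<Sum>j<N. wfun y \<epsilon> (zs j)))
                           / (cfun p q \<theta> t * (1 + (\<Sum>j<N - 1. wfun y \<epsilon> (xs j)))))
              \<partial>(PiM {..<N} (\<lambda>_. density \<nu> (\<lambda>x. ennreal (f t x)))))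
        \<partial>(PiM {..<N - 1} (\<lambda>_. density \<nu> (\<lambda>x. ennreal (f \<theta> x)))))"

text \<open>Action of a Metropolis--Hastings kernel
  P(theta,d theta') = q(theta,d theta') alpha(theta,theta')
     + {1 - int q(theta,d theta'') alpha(theta,theta'')} delta_theta(d theta')
  on a function g: (Pg)(theta) = int g(theta') P(theta, d theta').\<close>
definition mh_op :: "'a measure \<Rightarrow> ('a \<Rightarrow> 'a \<Rightarrow> real) \<Rightarrow> ('a \<Rightarrow> 'a \<Rightarrow> real)
      \<Rightarrow> ('a \<Rightarrow> real) \<Rightarrow> 'a \<Rightarrow> real" where
  "mh_op \<mu> q \<alpha> g \<theta> = (\<integral> t. q \<theta> t * \<alpha> \<theta> t * g t \<partial>\<mu>)
      + (1 - (\<integral> t. q \<theta> t * \<alpha> \<theta> t \<partial>\<mu>)) * g \<theta>"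

definition P2N_op where
  "P2N_op \<mu> \<nu> f p q y \<epsilon> N = mh_op \<mu> q (alpha2N \<nu> f p q y \<epsilon> N)"

definition Q0 :: "'a measure \<Rightarrow> 'a::metric_space \<Rightarrow> ('a \<Rightarrow> 'a \<Rightarrow> real) \<Rightarrow> bool" where
  "Q0 \<mu> \<theta>0 q \<longleftrightarrow> (\<forall>\<delta>>0. \<forall>r>0. \<exists>R>0. \<forall>\<theta>\<in>- ball \<theta>0 R.
      enn2real (\<integral>\<^sup>+ t \<in> ball \<theta>0 r. ennreal (q \<theta> t) \<partial>\<mu>) < \<delta>)"

end

theory Submission
  imports Defs
begin

text \<open>
  We show that \<open>1\<close> lies in the spectrum of \<open>P\<^sub>2\<^sub>,\<^sub>N\<close> on \<open>L\<^sup>2\<^sub>0(\<pi>)\<close> because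
  \<open>P - I\<close> is not onto. The acceptance mass \<open>q(\<theta>,t) \<alpha>(\<theta>,t)\<close> is dominated by a kernel
  \<open>B(\<theta>,t)\<close> satisfying \<open>\<pi>(\<theta>) B(\<theta>,t) \<le> N \<pi>(t) q(t,\<theta>)\<close>. With \<open>A(\<theta>) = \<integral> B(\<theta>,t) dt\<close>,
  Cauchy--Schwarz and this inequality give \<open>\<integral> (Pu - u)\<^sup>2 / A d\<pi> \<le> 2 (N + 1) \<parallel>u\<parallel>\<^sup>2\<close>, so the
  range of \<open>P - I\<close> lies in \<open>L\<^sup>2(\<pi> / A)\<close>. Both \<open>h\<close> and the proposal mass near the origin
  vanish at infinity, hence so does \<open>A\<close>; a centred step function on disjoint annuli of positive
  \<open>\<pi>\<close>-mass, on the \<open>k\<close>-th of which \<open>A \<le> 2\<^sup>-\<^sup>k\<close>, lies in \<open>L\<^sup>2\<^sub>0(\<pi>)\<close> but not in \<open>L\<^sup>2(\<pi> / A)\<close>.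
\<close>

lemma ennreal_divide_antimono:
  fixes a b c :: ennreal
  assumes "a \<le> b"
  shows "c / b \<le> c / a"
  unfolding divide_ennreal_def
proof (intro mult_left_mono)
  show "inverse b \<le> inverse a"
  proof (cases a; cases b)
    fix r s assume "0 \<le> r" "a = ennreal r" "b = ennreal s"
    moreover have "r \<le> s" if "0 < r"
      using assms \<open>a = ennreal r\<close> \<open>b = ennreal s\<close> that by (simp add: ennreal_le_iff2)
    ultimately show ?thesis
      by (cases "r = 0") (auto simp: inverse_ennreal le_imp_inverse_le)
  qed (use assms in \<open>auto simp: top_unique\<close>)
qed simp

lemma ennreal_divide_le_of_le_mult:
  fixes x a z :: ennreal
  assumes "x \<le> a * z"
  shows "x / a \<le> z"
proof (cases "a = 0")
  case False
  then show ?thesis using assms by (intro divide_le_posI_ennreal) (auto simp: zero_less_iff_neq_zero)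
qed (use assms in simp)

lemma ennreal_suminf_one: "(\<Sum>k::nat. 1 :: ennreal) = \<infinity>"
proof -
  have "of_nat n \<le> (\<Sum>k::nat. 1 :: ennreal)" for n
    using sum_le_suminf[OF summableI, of "{..<n}" "\<lambda>_. 1 :: ennreal"] by simp
  then have "(SUP n. of_nat n :: ennreal) \<le> (\<Sum>k::nat. 1 :: ennreal)"
    by (intro SUP_least) auto
  then show ?thesis by (simp add: ennreal_SUP_of_nat_eq_top top_unique)
qed

lemma square_diff_le: "(a - b)\<^sup>2 \<le> 2 * a\<^sup>2 + 2 * (b::real)\<^sup>2"
proof -
  have "2 * a\<^sup>2 + 2 * b\<^sup>2 - (a - b)\<^sup>2 = (a + b)\<^sup>2"
    by (simp add: power2_eq_square algebra_simps)
  then show ?thesis using zero_le_power2[of "a + b"] by linarith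
qed

lemma suminf_mult_indicator:
  fixes c :: "nat \<Rightarrow> real"
  assumes "disjoint_family E" "x \<in> E k"
  shows "(\<Sum>i. c i * indicator (E i) x) = c k"
proof -
  have "(\<lambda>i. c i * indicator (E i) x) = (\<lambda>i. if i = k then c i else 0)"
    using assms by (auto simp: disjoint_family_on_def indicator_def fun_eq_iff)
  then show ?thesis using sums_unique[OF sums_single[of k c]] by simp
qed

lemma nn_integral_suminf_indicator:
  fixes a :: "nat \<Rightarrow> ennreal"
  assumes "\<And>k. E k \<in> sets M"
  shows "(\<integral>\<^sup>+ x. (\<Sum>k. a k * indicator (E k) x) \<partial>M) = (\<Sum>k. a k * emeasure M (E k))"
  using assms by (simp add: nn_integral_suminf nn_integral_cmult_indicator)

lemma ennreal_abs_integral_le: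
  fixes F :: "'a \<Rightarrow> real"
  assumes "\<And>t. \<bar>F t\<bar> \<le> G t"
  shows "ennreal \<bar>\<integral> t. F t \<partial>M\<bar> \<le> (\<integral>\<^sup>+ t. ennreal (G t) \<partial>M)"
proof (cases "integrable M F")
  case True
  have "ennreal \<bar>\<integral> t. F t \<partial>M\<bar> \<le> (\<integral>\<^sup>+ t. norm (F t) \<partial>M)"
    using integral_norm_bound_ennreal[OF True] by simp
  also have "\<dots> \<le> (\<integral>\<^sup>+ t. ennreal (G t) \<partial>M)"
    using assms by (intro nn_integral_mono ennreal_leI) auto
  finally show ?thesis .
qed (simp add: not_integrable_integral_eq)

lemma weighted_Cauchy_Schwarz_nn_integral:
  fixes b u :: "'a \<Rightarrow> real"
  assumes [measurable]: "b \<in> borel_measurable M" "u \<in> borel_measurable M" and b: "\<And>t. 0 \<le> b t"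
  shows "(\<integral>\<^sup>+ t. ennreal (b t * \<bar>u t\<bar>) \<partial>M)\<^sup>2
    \<le> (\<integral>\<^sup>+ t. ennreal (b t) \<partial>M) * (\<integral>\<^sup>+ t. ennreal (b t * (u t)\<^sup>2) \<partial>M)"
proof -
  let ?F = "\<lambda>t. ennreal (sqrt (b t))" and ?G = "\<lambda>t. ennreal (sqrt (b t) * \<bar>u t\<bar>)"
  have "(\<integral>\<^sup>+ t. ?F t * ?G t \<partial>M)\<^sup>2 \<le> (\<integral>\<^sup>+ t. ?F t ^ 2 \<partial>M) * (\<integral>\<^sup>+ t. ?G t ^ 2 \<partial>M)"
    by (rule Cauchy_Schwarz_nn_integral) auto
  moreover have "?F t * ?G t = ennreal (b t * \<bar>u t\<bar>)" for t
    using b by (simp add: ennreal_mult[symmetric] mult.assoc[symmetric])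
  moreover have "?F t ^ 2 = ennreal (b t)" "?G t ^ 2 = ennreal (b t * (u t)\<^sup>2)" for t
    using b by (simp_all add: ennreal_power power_mult_distrib)
  ultimately show ?thesis by simp
qed

lemma integral_le_of_bound:
  fixes F G :: "'a \<Rightarrow> real"
  assumes "integrable M G" "\<And>x. x \<in> space M \<Longrightarrow> F x \<le> G x" "0 \<le> integral\<^sup>L M G"
  shows "integral\<^sup>L M F \<le> integral\<^sup>L M G"
proof (cases "integrable M F")
  case True
  then show ?thesis using assms by (intro integral_mono) auto
qed (use assms in \<open>simp add: not_integrable_integral_eq\<close>)

lemma iterated_integral_le_of_bound:
  fixes F :: "'a \<Rightarrow> 'b \<Rightarrow> real"
  assumes "prob_space M" "integrable M' G" "0 \<le> integral\<^sup>L M' G" "\<And>x z. F x z \<le> G z"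
  shows "(\<integral> x. (\<integral> z. F x z \<partial>M') \<partial>M) \<le> integral\<^sup>L M' G"
proof -
  interpret prob_space M by fact
  have "(\<integral> x. (\<integral> z. F x z \<partial>M') \<partial>M) \<le> (\<integral> x. integral\<^sup>L M' G \<partial>M)"
    using assms(2-4) by (intro integral_le_of_bound integral_le_of_bound) auto
  then show ?thesis by (simp add: prob_space)
qed

lemma not_variance_bounding_if_weighted_range:
  fixes T :: "('a \<Rightarrow> real) \<Rightarrow> 'a \<Rightarrow> real" and A :: "'a \<Rightarrow> ennreal"
  assumes range: "\<And>u g. u \<in> L2_0 M \<Longrightarrow> AE x in M. T u x - u x = g x
      \<Longrightarrow> (\<integral>\<^sup>+ x. ennreal ((g x)\<^sup>2) / A x \<partial>M) < \<infinity>"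
    and g: "g \<in> L2_0 M" "(\<integral>\<^sup>+ x. ennreal ((g x)\<^sup>2) / A x \<partial>M) = \<infinity>"
  shows "\<not> variance_bounding M T"
proof -
  have "\<not> (\<exists>u\<in>L2_0 M. AE x in M. T u x - 1 * u x = g x)"
    using range g(2) by fastforce
  then have "1 \<in> spectrum0 M T"
    using g(1) unfolding spectrum0_def by blast
  then show ?thesis unfolding variance_bounding_def by force
qed

context prob_space
begin

lemma exists_L2_0_eq_outside:
  assumes F: "F \<in> events" "prob F > 0"
    and u[measurable]: "u \<in> borel_measurable M" and u2: "integrable M (\<lambda>x. (u x)\<^sup>2)"
  shows "\<exists>g\<in>L2_0 M. \<forall>x. x \<notin> F \<longrightarrow> g x = u x"
proof -
  define c where "c = expectation u / prob F"
  define g where "g x = u x - c * indicator F x" for x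
  have [measurable]: "F \<in> sets M" using F by simp
  have [measurable]: "g \<in> borel_measurable M" unfolding g_def by measurable
  have "integrable M (\<lambda>x. (g x)\<^sup>2)"
  proof (rule Bochner_Integration.integrable_bound[of _ "\<lambda>x. 2 * (u x)\<^sup>2 + 2 * c\<^sup>2"])
    show "AE x in M. norm ((g x)\<^sup>2) \<le> norm (2 * (u x)\<^sup>2 + 2 * c\<^sup>2)"
    proof (intro AE_I2)
      fix x
      have "(g x)\<^sup>2 \<le> 2 * (u x)\<^sup>2 + 2 * (c * indicator F x)\<^sup>2"
        unfolding g_def by (rule square_diff_le)
      also have "(c * indicator F x)\<^sup>2 \<le> c\<^sup>2"
        by (simp add: indicator_def)
      finally show "norm ((g x)\<^sup>2) \<le> norm (2 * (u x)\<^sup>2 + 2 * c\<^sup>2)" by simp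
    qed
  qed (use u2 in \<open>simp_all add: g_def\<close>)
  moreover have "expectation g = 0"
  proof -
    have "integrable M u" by (rule square_integrable_imp_integrable[OF u u2])
    then have "expectation g = expectation u - c * prob F"
      unfolding g_def using F by (simp add: emeasure_eq_measure)
    then show ?thesis using F by (simp add: c_def)
  qed
  ultimately have "g \<in> L2_0 M" by (simp add: L2_0_def g_def)
  then show ?thesis by (intro bexI[where x=g]) (auto simp: g_def)
qed

lemma exists_step_function:
  assumes E: "\<And>k. E k \<in> events" "\<And>k. prob (E k) > 0" "disjoint_family E"
  obtains u where "u \<in> borel_measurable M" "integrable M (\<lambda>x. (u x)\<^sup>2)"
    "\<And>k x. x \<in> E k \<Longrightarrow> (u x)\<^sup>2 = (1/2)^k / prob (E k)"
proof
  have [measurable]: "E k \<in> sets M" for k using E by simp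
  define c where "c k = sqrt ((1/2)^k / prob (E k))" for k
  have c2: "(c k)\<^sup>2 = (1/2)^k / prob (E k)" for k
    using E(2)[of k] by (simp add: c_def)
  define u where "u x = (\<Sum>k. c k * indicator (E k) x)" for x
  show "u \<in> borel_measurable M" unfolding u_def by measurable
  show u_E: "(u x)\<^sup>2 = (1/2)^k / prob (E k)" if "x \<in> E k" for x k
    using suminf_mult_indicator[OF E(3) that, of c] by (simp add: u_def c2)
  have "ennreal ((u x)\<^sup>2) = (\<Sum>k. ennreal ((1/2)^k / prob (E k)) * indicator (E k) x)" for x
  proof (cases "\<exists>k. x \<in> E k")
    case True
    then obtain k where "x \<in> E k" by blast
    then show ?thesis using suminf_cmult_indicator[OF E(3)] u_E by simp
  qed (simp add: u_def)
  then have "(\<integral>\<^sup>+ x. ennreal ((u x)\<^sup>2) \<partial>M) = (\<Sum>k. ennreal ((1/2)^k / prob (E k)) * emeasure M (E k))"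
    by (simp add: nn_integral_suminf_indicator)
  also have "\<dots> = (\<Sum>k. ennreal ((1/2)^k))"
    using E(2) by (intro suminf_cong) (simp add: emeasure_eq_measure ennreal_mult'[symmetric] dual_order.strict_implies_not_eq)
  also have "\<dots> = ennreal (\<Sum>k. (1/2)^k)"
    by (intro suminf_ennreal2) auto
  finally show "integrable M (\<lambda>x. (u x)\<^sup>2)"
    by (intro integrableI_nonneg) (auto simp: u_def)
qed

lemma exists_L2_0_weighted_infinite:
  fixes A :: "'a \<Rightarrow> ennreal"
  assumes F: "F \<in> events" "prob F > 0"
    and E: "\<And>k. E k \<in> events" "\<And>k. prob (E k) > 0" "\<And>k. E k \<inter> F = {}" "disjoint_family E"
    and A: "\<And>k x. x \<in> E k \<Longrightarrow> A x \<le> ennreal ((1/2)^k)"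
  shows "\<exists>g\<in>L2_0 M. (\<integral>\<^sup>+ x. ennreal ((g x)\<^sup>2) / A x \<partial>M) = \<infinity>"
proof -
  obtain u where u: "u \<in> borel_measurable M" "integrable M (\<lambda>x. (u x)\<^sup>2)"
    and u_E: "\<And>k x. x \<in> E k \<Longrightarrow> (u x)\<^sup>2 = (1/2)^k / prob (E k)"
    using exists_step_function[OF E(1,2,4)] by blast
  then obtain g where g: "g \<in> L2_0 M" "\<And>x. x \<notin> F \<Longrightarrow> g x = u x"
    using exists_L2_0_eq_outside[OF F] by blast
  have "(\<Sum>k. 1 :: ennreal) = (\<Sum>k. ennreal (1 / prob (E k)) * emeasure M (E k))"
    using E(2) by (intro suminf_cong) (simp add: emeasure_eq_measure ennreal_mult'[symmetric] dual_order.strict_implies_not_eq)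
  also have "\<dots> = (\<integral>\<^sup>+ x. (\<Sum>k. ennreal (1 / prob (E k)) * indicator (E k) x) \<partial>M)"
    using E(1) by (simp add: nn_integral_suminf_indicator)
  also have "\<dots> \<le> (\<integral>\<^sup>+ x. ennreal ((g x)\<^sup>2) / A x \<partial>M)"
  proof (intro nn_integral_mono)
    fix x
    show "(\<Sum>k. ennreal (1 / prob (E k)) * indicator (E k) x) \<le> ennreal ((g x)\<^sup>2) / A x"
    proof (cases "\<exists>k. x \<in> E k")
      case True
      then obtain k where k: "x \<in> E k" by blast
      then have "x \<notin> F" using E(3)[of k] by blast
      then have "ennreal (1 / prob (E k)) = ennreal ((g x)\<^sup>2) / ennreal ((1/2)^k)"
        using E(2)[of k] g(2) u_E[OF k] by (simp add: divide_ennreal)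
      also have "\<dots> \<le> ennreal ((g x)\<^sup>2) / A x"
        using A[OF k] by (rule ennreal_divide_antimono)
      finally show ?thesis using suminf_cmult_indicator[OF E(4) k] by simp
    qed simp
  qed
  finally have "(\<integral>\<^sup>+ x. ennreal ((g x)\<^sup>2) / A x \<partial>M) = \<infinity>"
    by (simp add: ennreal_suminf_one top_unique)
  then show ?thesis using g(1) by blast
qed

end

lemma exists_annulus_positive:
  fixes M :: "'a::metric_space measure"
  assumes sets: "sets M = sets borel" and tail: "emeasure M (- ball \<theta>0 R) > 0"
  shows "\<exists>R'>R. emeasure M (ball \<theta>0 R' - ball \<theta>0 R) > 0"
proof (rule ccontr)
  assume null: "\<not> ?thesis"
  let ?S = "\<lambda>n::nat. ball \<theta>0 (R + real n + 1) - ball \<theta>0 R"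
  have "(\<Union>n. ?S n) = - ball \<theta>0 R"
  proof safe
    fix x assume "x \<notin> ball \<theta>0 R"
    obtain n :: nat where "dist \<theta>0 x - R < real n" using reals_Archimedean2 by blast
    then have "dist \<theta>0 x < R + real n + 1" by linarith
    with \<open>x \<notin> ball \<theta>0 R\<close> have "x \<in> ?S n" by simp
    then show "x \<in> (\<Union>n. ?S n)" by blast
  qed
  moreover have "emeasure M (\<Union>n. ?S n) = 0"
  proof (intro emeasure_UN_eq_0)
    show "range ?S \<subseteq> sets M" unfolding sets by auto
  next
    fix n
    have "R < R + real n + 1" by simp
    then show "emeasure M (?S n) = 0" using null by (meson not_gr_zero)
  qed
  ultimately show False using tail by simp
qed

lemma exists_ball_positive:
  fixes M :: "'a::metric_space measure"
  assumes sets: "sets M = sets borel" and pos: "emeasure M (space M) > 0"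
  shows "\<exists>R>0. emeasure M (ball \<theta>0 R) > 0"
proof -
  have "- ball \<theta>0 0 = space M" using sets_eq_imp_space_eq[OF sets] by simp
  with pos obtain R where "R > 0" "emeasure M (ball \<theta>0 R - ball \<theta>0 0) > 0"
    using exists_annulus_positive[OF sets, of \<theta>0 0] by auto
  then show ?thesis by auto
qed

lemma disjoint_family_annuli:
  fixes r a :: "nat \<Rightarrow> real"
  assumes "incseq r" "\<And>k. r k \<le> a k"
  shows "disjoint_family (\<lambda>k. ball c (r (Suc k)) - ball c (a k))"
proof -
  have "(ball c (r (Suc j)) - ball c (a j)) \<inter> (ball c (r (Suc k)) - ball c (a k)) = {}"
    if "j < k" for j k
  proof -
    have "r (Suc j) \<le> a k" using assms that by (meson Suc_leI incseqD order_trans)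
    then show ?thesis by auto
  qed
  then show ?thesis
    unfolding disjoint_family_on_def by (metis Int_commute nat_neq_iff)
qed

lemma exists_disjoint_tail_annuli:
  fixes M :: "'a::metric_space measure" and T :: "nat \<Rightarrow> real"
  assumes sets: "sets M = sets borel" and pos: "emeasure M (space M) > 0"
    and tails: "\<And>r. r > 0 \<Longrightarrow> emeasure M (- ball \<theta>0 r) > 0" and T: "\<And>k. T k > 0"
  obtains R E where "R > 0" "emeasure M (ball \<theta>0 R) > 0" "disjoint_family E"
    "\<And>k. E k \<in> sets M" "\<And>k. emeasure M (E k) > 0"
    "\<And>k. E k \<inter> ball \<theta>0 R = {}" "\<And>k. E k \<inter> ball \<theta>0 (T k) = {}"
proof -
  obtain R where R: "R > 0" "emeasure M (ball \<theta>0 R) > 0"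
    using exists_ball_positive[OF sets pos] by blast
  obtain next_radius where next_radius: "\<And>r. r > 0 \<Longrightarrow> next_radius r > r"
    "\<And>r. r > 0 \<Longrightarrow> emeasure M (ball \<theta>0 (next_radius r) - ball \<theta>0 r) > 0"
    using exists_annulus_positive[OF sets tails] by metis
  define rad where "rad = rec_nat R (\<lambda>k r. next_radius (max r (T k)))"
  have rad_0: "rad 0 = R" and rad_Suc: "rad (Suc k) = next_radius (max (rad k) (T k))" for k
    by (simp_all add: rad_def)
  have rad_pos: "rad k > 0" for k
  proof (induction k)
    case (Suc k)
    then have "0 < max (rad k) (T k)" by simp
    with next_radius(1)[OF this] show ?case unfolding rad_Suc by linarith
  qed (simp add: rad_0 R)
  have "rad (Suc k) > max (rad k) (T k)" for k
    unfolding rad_Suc using rad_pos[of k] by (intro next_radius(1)) simp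
  then have "incseq rad"
    by (intro incseq_SucI less_imp_le) (auto intro: le_less_trans)
  define E where "E k = ball \<theta>0 (rad (Suc k)) - ball \<theta>0 (max (rad k) (T k))" for k
  show ?thesis
  proof
    show "disjoint_family E"
      unfolding E_def using \<open>incseq rad\<close> by (intro disjoint_family_annuli) auto
    show "E k \<in> sets M" for k unfolding E_def sets by auto
    show "emeasure M (E k) > 0" for k
      unfolding E_def rad_Suc using rad_pos[of k] by (intro next_radius(2)) simp
    show "E k \<inter> ball \<theta>0 R = {}" for k
      using incseqD[OF \<open>incseq rad\<close>, of 0 k] unfolding E_def rad_0 by auto
    show "E k \<inter> ball \<theta>0 (T k) = {}" for k
      unfolding E_def by auto
  qed (use R in auto)
qed

locale dominated_mh =
  fixes \<mu> :: "'a measure" and q \<alpha> B :: "'a \<Rightarrow> 'a \<Rightarrow> real" and d :: "'a \<Rightarrow> real" and C :: real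
  assumes sigma_finite: "sigma_finite_measure \<mu>"
    and q_measurable: "(\<lambda>(\<theta>, t). q \<theta> t) \<in> borel_measurable (\<mu> \<Otimes>\<^sub>M \<mu>)"
    and q_nonneg: "\<And>\<theta> t. 0 \<le> q \<theta> t"
    and q_markov: "\<And>\<theta>. (\<integral>\<^sup>+ t. ennreal (q \<theta> t) \<partial>\<mu>) = 1"
    and B_measurable: "(\<lambda>(\<theta>, t). B \<theta> t) \<in> borel_measurable (\<mu> \<Otimes>\<^sub>M \<mu>)"
    and acceptance_nonneg: "\<And>\<theta> t. 0 \<le> q \<theta> t * \<alpha> \<theta> t"
    and acceptance_le: "\<And>\<theta> t. q \<theta> t * \<alpha> \<theta> t \<le> B \<theta> t"
    and B_mass_le: "\<And>\<theta>. (\<integral>\<^sup>+ t. ennreal (B \<theta> t) \<partial>\<mu>) \<le> 1"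
    and d_measurable: "d \<in> borel_measurable \<mu>"
    and d_nonneg: "\<And>\<theta>. 0 \<le> d \<theta>"
    and C_nonneg: "0 \<le> C"
    and B_balance: "\<And>\<theta> t. d \<theta> * B \<theta> t \<le> C * d t * q t \<theta>"
begin

lemma B_nonneg: "0 \<le> B \<theta> t"
  using acceptance_nonneg acceptance_le order_trans by blast

lemma measurable_kernels [measurable]:
  "(\<lambda>x. q (fst x) (snd x)) \<in> borel_measurable (\<mu> \<Otimes>\<^sub>M \<mu>)"
  "(\<lambda>x. B (fst x) (snd x)) \<in> borel_measurable (\<mu> \<Otimes>\<^sub>M \<mu>)"
  "d \<in> borel_measurable \<mu>"
  using q_measurable B_measurable d_measurable
  by (simp_all add: case_prod_beta')

lemma B_section_measurable [measurable]: "\<theta> \<in> space \<mu> \<Longrightarrow> B \<theta> \<in> borel_measurable \<mu>"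
  using measurable_Pair2[OF B_measurable] by simp

lemma B_weighted_measurable [measurable]:
  assumes [measurable]: "u \<in> borel_measurable \<mu>"
  shows "(\<lambda>\<theta>. \<integral>\<^sup>+ t. ennreal (B \<theta> t * (u t)\<^sup>2) \<partial>\<mu>) \<in> borel_measurable \<mu>"
proof -
  interpret sigma_finite_measure \<mu> by (rule sigma_finite)
  show ?thesis by measurable
qed

lemma mh_op_minus_id_bound:
  assumes [measurable]: "u \<in> borel_measurable \<mu>" and "\<theta> \<in> space \<mu>"
  shows "ennreal ((mh_op \<mu> q \<alpha> u \<theta> - u \<theta>)\<^sup>2) / (\<integral>\<^sup>+ t. ennreal (B \<theta> t) \<partial>\<mu>)
    \<le> 2 * (\<integral>\<^sup>+ t. ennreal (B \<theta> t * (u t)\<^sup>2) \<partial>\<mu>) + 2 * ennreal ((u \<theta>)\<^sup>2)"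
proof -
  define A where "A = (\<integral>\<^sup>+ t. ennreal (B \<theta> t) \<partial>\<mu>)"
  define J where "J = (\<integral>\<^sup>+ t. ennreal (B \<theta> t * (u t)\<^sup>2) \<partial>\<mu>)"
  define K where "K = (\<integral> t. q \<theta> t * \<alpha> \<theta> t * u t \<partial>\<mu>)"
  define a where "a = (\<integral> t. q \<theta> t * \<alpha> \<theta> t \<partial>\<mu>)"
  have [measurable]: "B \<theta> \<in> borel_measurable \<mu>" using \<open>\<theta> \<in> space \<mu>\<close> by simp
  have "\<bar>q \<theta> t * \<alpha> \<theta> t * u t\<bar> \<le> B \<theta> t * \<bar>u t\<bar>" for t
    using acceptance_nonneg[of \<theta> t] acceptance_le[of \<theta> t]
    by (metis abs_mult abs_of_nonneg abs_ge_zero mult_right_mono)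
  have "ennreal (K\<^sup>2) = (ennreal \<bar>K\<bar>)\<^sup>2" by (simp add: ennreal_power)
  also have "\<dots> \<le> (\<integral>\<^sup>+ t. ennreal (B \<theta> t * \<bar>u t\<bar>) \<partial>\<mu>)\<^sup>2"
    unfolding K_def by (intro power_mono ennreal_abs_integral_le) (fact | simp)+
  also have "\<dots> \<le> A * J"
    unfolding A_def J_def using B_nonneg by (intro weighted_Cauchy_Schwarz_nn_integral) auto
  finally have K2: "ennreal (K\<^sup>2) \<le> A * J" .
  have "ennreal (a\<^sup>2) = (ennreal \<bar>a\<bar>)\<^sup>2" by (simp add: ennreal_power)
  also have "\<dots> \<le> A\<^sup>2"
    unfolding a_def A_def using acceptance_nonneg acceptance_le
    by (intro power_mono ennreal_abs_integral_le) auto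
  also have "\<dots> \<le> A"
    using B_mass_le[of \<theta>] unfolding A_def power2_eq_square by (intro mult_left_le) auto
  finally have a2: "ennreal (a\<^sup>2) \<le> A" .
  have "mh_op \<mu> q \<alpha> u \<theta> - u \<theta> = K - a * u \<theta>"
    by (simp add: mh_op_def K_def a_def algebra_simps)
  then have "ennreal ((mh_op \<mu> q \<alpha> u \<theta> - u \<theta>)\<^sup>2) \<le> ennreal (2 * K\<^sup>2 + 2 * (a\<^sup>2 * (u \<theta>)\<^sup>2))"
    using square_diff_le[of K "a * u \<theta>"] by (intro ennreal_leI) (simp add: power_mult_distrib)
  also have "\<dots> = 2 * ennreal (K\<^sup>2) + 2 * (ennreal (a\<^sup>2) * ennreal ((u \<theta>)\<^sup>2))"
    by (simp add: ennreal_plus ennreal_mult')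
  also have "\<dots> \<le> 2 * (A * J) + 2 * (A * ennreal ((u \<theta>)\<^sup>2))"
    using K2 a2 by (intro add_mono mult_left_mono mult_right_mono) auto
  also have "\<dots> = A * (2 * J + 2 * ennreal ((u \<theta>)\<^sup>2))"
    by (simp add: distrib_left mult_ac)
  finally show ?thesis
    unfolding A_def J_def by (rule ennreal_divide_le_of_le_mult)
qed

lemma nn_integral_B_weighted_le:
  assumes [measurable]: "u \<in> borel_measurable \<mu>"
  shows "(\<integral>\<^sup>+ \<theta>. (\<integral>\<^sup>+ t. ennreal (B \<theta> t * (u t)\<^sup>2) \<partial>\<mu>) \<partial>density \<mu> d)
    \<le> ennreal C * (\<integral>\<^sup>+ t. ennreal ((u t)\<^sup>2) \<partial>density \<mu> d)"
proof -
  interpret pair_sigma_finite \<mu> \<mu> by (intro pair_sigma_finite.intro sigma_finite)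
  have "(\<integral>\<^sup>+ \<theta>. (\<integral>\<^sup>+ t. ennreal (B \<theta> t * (u t)\<^sup>2) \<partial>\<mu>) \<partial>density \<mu> d)
      = (\<integral>\<^sup>+ \<theta>. ennreal (d \<theta>) * (\<integral>\<^sup>+ t. ennreal (B \<theta> t * (u t)\<^sup>2) \<partial>\<mu>) \<partial>\<mu>)"
    by (rule nn_integral_density) measurable
  also have "\<dots> = (\<integral>\<^sup>+ \<theta>. (\<integral>\<^sup>+ t. ennreal (d \<theta> * B \<theta> t * (u t)\<^sup>2) \<partial>\<mu>) \<partial>\<mu>)"
  proof (intro nn_integral_cong)
    fix \<theta> assume [measurable]: "\<theta> \<in> space \<mu>"
    show "ennreal (d \<theta>) * (\<integral>\<^sup>+ t. ennreal (B \<theta> t * (u t)\<^sup>2) \<partial>\<mu>)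
      = (\<integral>\<^sup>+ t. ennreal (d \<theta> * B \<theta> t * (u t)\<^sup>2) \<partial>\<mu>)"
      using d_nonneg by (simp add: nn_integral_cmult[symmetric] ennreal_mult' mult.assoc)
  qed
  also have "\<dots> \<le> (\<integral>\<^sup>+ \<theta>. (\<integral>\<^sup>+ t. ennreal (C * d t * (u t)\<^sup>2) * ennreal (q t \<theta>) \<partial>\<mu>) \<partial>\<mu>)"
  proof (intro nn_integral_mono)
    fix \<theta> t
    have "d \<theta> * B \<theta> t * (u t)\<^sup>2 \<le> C * d t * (u t)\<^sup>2 * q t \<theta>"
      using mult_right_mono[OF B_balance[of \<theta> t] zero_le_power2[of "u t"]] by (simp add: mult_ac)
    then show "ennreal (d \<theta> * B \<theta> t * (u t)\<^sup>2) \<le> ennreal (C * d t * (u t)\<^sup>2) * ennreal (q t \<theta>)"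
      using q_nonneg[of t \<theta>] by (simp add: ennreal_mult''[symmetric] ennreal_leI)
  qed
  also have "\<dots> = (\<integral>\<^sup>+ t. (\<integral>\<^sup>+ \<theta>. ennreal (C * d t * (u t)\<^sup>2) * ennreal (q t \<theta>) \<partial>\<mu>) \<partial>\<mu>)"
    by (rule Fubini') measurable
  also have "\<dots> = (\<integral>\<^sup>+ t. ennreal (C * d t * (u t)\<^sup>2) \<partial>\<mu>)"
  proof (intro nn_integral_cong)
    fix t assume "t \<in> space \<mu>"
    then have [measurable]: "q t \<in> borel_measurable \<mu>"
      using measurable_Pair2[OF q_measurable] by simp
    show "(\<integral>\<^sup>+ \<theta>. ennreal (C * d t * (u t)\<^sup>2) * ennreal (q t \<theta>) \<partial>\<mu>) = ennreal (C * d t * (u t)\<^sup>2)"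
      by (simp add: nn_integral_cmult q_markov)
  qed
  also have "\<dots> = ennreal C * (\<integral>\<^sup>+ t. ennreal (d t) * ennreal ((u t)\<^sup>2) \<partial>\<mu>)"
    using C_nonneg d_nonneg by (simp add: nn_integral_cmult[symmetric] ennreal_mult' mult.assoc)
  also have "\<dots> = ennreal C * (\<integral>\<^sup>+ t. ennreal ((u t)\<^sup>2) \<partial>density \<mu> d)"
    by (simp add: nn_integral_density)
  finally show ?thesis .
qed

lemma weighted_range_finite:
  assumes u: "u \<in> L2_0 (density \<mu> d)"
    and g: "AE \<theta> in density \<mu> d. mh_op \<mu> q \<alpha> u \<theta> - u \<theta> = g \<theta>"
  shows "(\<integral>\<^sup>+ \<theta>. ennreal ((g \<theta>)\<^sup>2) / (\<integral>\<^sup>+ t. ennreal (B \<theta> t) \<partial>\<mu>) \<partial>density \<mu> d) < \<infinity>"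
proof -
  have [measurable]: "u \<in> borel_measurable \<mu>"
    using u by (simp add: L2_0_def measurable_cong_sets[OF sets_density refl])
  have "integrable (density \<mu> d) (\<lambda>x. (u x)\<^sup>2)" using u by (simp add: L2_0_def)
  then have u2: "(\<integral>\<^sup>+ t. ennreal ((u t)\<^sup>2) \<partial>density \<mu> d) < \<infinity>"
    by (auto dest: integrableD(2) simp: less_top)
  let ?J = "\<lambda>\<theta>. \<integral>\<^sup>+ t. ennreal (B \<theta> t * (u t)\<^sup>2) \<partial>\<mu>"
  have "(\<integral>\<^sup>+ \<theta>. ennreal ((g \<theta>)\<^sup>2) / (\<integral>\<^sup>+ t. ennreal (B \<theta> t) \<partial>\<mu>) \<partial>density \<mu> d)
      \<le> (\<integral>\<^sup>+ \<theta>. 2 * ?J \<theta> + 2 * ennreal ((u \<theta>)\<^sup>2) \<partial>density \<mu> d)"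
    using g
  proof (intro nn_integral_mono_AE, elim AE_mp, intro AE_I2 impI)
    fix \<theta> assume "\<theta> \<in> space (density \<mu> d)" "mh_op \<mu> q \<alpha> u \<theta> - u \<theta> = g \<theta>"
    then show "ennreal ((g \<theta>)\<^sup>2) / (\<integral>\<^sup>+ t. ennreal (B \<theta> t) \<partial>\<mu>) \<le> 2 * ?J \<theta> + 2 * ennreal ((u \<theta>)\<^sup>2)"
      using mh_op_minus_id_bound[of u \<theta>] by simp
  qed
  also have "\<dots> = 2 * (\<integral>\<^sup>+ \<theta>. ?J \<theta> \<partial>density \<mu> d) + 2 * (\<integral>\<^sup>+ \<theta>. ennreal ((u \<theta>)\<^sup>2) \<partial>density \<mu> d)"
    by (simp add: nn_integral_add nn_integral_cmult)
  also have "\<dots> \<le> 2 * (ennreal C * (\<integral>\<^sup>+ t. ennreal ((u t)\<^sup>2) \<partial>density \<mu> d))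
      + 2 * (\<integral>\<^sup>+ \<theta>. ennreal ((u \<theta>)\<^sup>2) \<partial>density \<mu> d)"
    using nn_integral_B_weighted_le by (intro add_mono mult_left_mono) auto
  also have "\<dots> < \<infinity>"
    using u2 by (simp add: ennreal_mult_less_top)
  finally show ?thesis .
qed

end

locale abc_mh =
  fixes \<mu> :: "'a::metric_space measure" and \<nu> :: "'b::metric_space measure"
    and p :: "'a \<Rightarrow> real" and f :: "'a \<Rightarrow> 'b \<Rightarrow> real" and q :: "'a \<Rightarrow> 'a \<Rightarrow> real"
    and y :: 'b and \<epsilon> :: real and N :: nat
  assumes sets_mu: "sets \<mu> = sets borel" and sf_mu: "sigma_finite_measure \<mu>"
    and sets_nu: "sets \<nu> = sets borel" and sf_nu: "sigma_finite_measure \<nu>"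
    and p_meas: "p \<in> borel_measurable \<mu>" and p_nonneg: "\<And>\<theta>. p \<theta> \<ge> 0"
    and f_meas: "(\<lambda>(\<theta>, x). f \<theta> x) \<in> borel_measurable (\<mu> \<Otimes>\<^sub>M \<nu>)"
    and f_dens: "\<And>\<theta>. (\<integral>\<^sup>+ x. ennreal (f \<theta> x) \<partial>\<nu>) = 1"
    and q_meas: "(\<lambda>(\<theta>, t). q \<theta> t) \<in> borel_measurable (\<mu> \<Otimes>\<^sub>M \<mu>)"
    and q_nonneg: "\<And>\<theta> t. q \<theta> t \<ge> 0"
    and q_dens: "\<And>\<theta>. (\<integral>\<^sup>+ t. ennreal (q \<theta> t) \<partial>\<mu>) = 1"
    and H_pos: "0 < Hconst \<mu> p \<nu> f y \<epsilon>" and H_fin: "Hconst \<mu> p \<nu> f y \<epsilon> < \<infinity>"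
begin

abbreviation "h \<equiv> hfun \<nu> f y \<epsilon>"
abbreviation "\<alpha> \<equiv> alpha2N \<nu> f p q y \<epsilon> N"
abbreviation "\<pi> \<equiv> post \<mu> p \<nu> f y \<epsilon>"
abbreviation "lik \<theta> \<equiv> density \<nu> (\<lambda>x. ennreal (f \<theta> x))"
abbreviation "hits n zs \<equiv> \<Sum>j<n. wfun y \<epsilon> (zs j)"

lemma space_mu [simp]: "space \<mu> = UNIV" and space_nu [simp]: "space \<nu> = UNIV"
  using sets_eq_imp_space_eq[OF sets_mu] sets_eq_imp_space_eq[OF sets_nu] by simp_all

lemma measurable_sections [measurable]:
  "f \<theta> \<in> borel_measurable \<nu>" "q \<theta> \<in> borel_measurable \<mu>"
  using measurable_Pair2[OF f_meas, of \<theta>] measurable_Pair2[OF q_meas, of \<theta>] by simp_all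

lemma measurable_data [measurable]:
  "p \<in> borel_measurable \<mu>"
  "(\<lambda>x. f (fst x) (snd x)) \<in> borel_measurable (\<mu> \<Otimes>\<^sub>M \<nu>)"
  "(\<lambda>x. q (fst x) (snd x)) \<in> borel_measurable (\<mu> \<Otimes>\<^sub>M \<mu>)"
  "ball y r \<in> sets \<nu>" "ball \<theta>0 r \<in> sets \<mu>"
  using p_meas f_meas q_meas sets_mu sets_nu
  by (simp_all add: case_prod_beta')

lemma h_nonneg: "0 \<le> h \<theta>"
  by (simp add: hfun_def)

lemma h_le_1: "h \<theta> \<le> 1"
proof -
  have "(\<integral>\<^sup>+ x \<in> ball y \<epsilon>. ennreal (f \<theta> x) \<partial>\<nu>) \<le> (\<integral>\<^sup>+ x. ennreal (f \<theta> x) \<partial>\<nu>)"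
    by (intro nn_integral_mono) (auto simp: indicator_def)
  then show ?thesis
    using f_dens unfolding hfun_def by (metis enn2real_mono enn2real_1 ennreal_one_less_top)
qed

lemma h_measurable [measurable]: "h \<in> borel_measurable \<mu>"
proof -
  interpret sigma_finite_measure \<nu> by (rule sf_nu)
  show ?thesis unfolding hfun_def by measurable
qed

lemma prob_space_lik: "prob_space (lik \<theta>)"
proof (rule prob_spaceI)
  have "emeasure (lik \<theta>) (space \<nu>) = (\<integral>\<^sup>+ x. ennreal (f \<theta> x) * indicator (space \<nu>) x \<partial>\<nu>)"
    by (rule emeasure_density) (simp_all add: sets_nu)
  also have "\<dots> = (\<integral>\<^sup>+ x. ennreal (f \<theta> x) \<partial>\<nu>)"
    by simp
  finally have "emeasure (lik \<theta>) (space \<nu>) = (\<integral>\<^sup>+ x. ennreal (f \<theta> x) \<partial>\<nu>)" .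
  then show "emeasure (lik \<theta>) (space (lik \<theta>)) = 1" using f_dens by simp
qed

lemma prob_space_PiM_lik: "prob_space (PiM I (\<lambda>_. lik \<theta>))"
  by (intro prob_space_PiM prob_space_lik)

lemma wfun_indicator: "wfun y \<epsilon> z = indicator (ball y \<epsilon>) z"
  by (simp add: wfun_def indicator_def dist_commute)

lemma integral_wfun_lik: "(\<integral> z. wfun y \<epsilon> z \<partial>lik \<theta>) = h \<theta>"
proof -
  have "(\<integral> z. wfun y \<epsilon> z \<partial>lik \<theta>) = enn2real (emeasure (lik \<theta>) (ball y \<epsilon>))"
    by (simp add: wfun_indicator[abs_def] measure_def)
  also have "emeasure (lik \<theta>) (ball y \<epsilon>) = (\<integral>\<^sup>+ x \<in> ball y \<epsilon>. ennreal (f \<theta> x) \<partial>\<nu>)"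
    by (rule emeasure_density) auto
  finally show ?thesis by (simp add: hfun_def)
qed

lemma expected_hits:
  "integrable (PiM {..<n} (\<lambda>_. lik \<theta>)) (hits n)"
  "(\<integral> zs. hits n zs \<partial>PiM {..<n} (\<lambda>_. lik \<theta>)) = real n * h \<theta>"
proof -
  interpret product_prob_space "\<lambda>_. lik \<theta>" "{..<n}"
    by (intro product_prob_spaceI prob_space_lik)
  have [measurable]: "wfun y \<epsilon> \<in> borel_measurable (lik \<theta>)"
    unfolding wfun_indicator[abs_def] by simp
  have "integrable (PiM {..<n} (\<lambda>_. lik \<theta>)) (\<lambda>zs. wfun y \<epsilon> (zs j))" if "j < n" for j
    using that by (intro P.integrable_const_bound[where B=1]) (auto simp: wfun_indicator)
  then show "integrable (PiM {..<n} (\<lambda>_. lik \<theta>)) (hits n)" by auto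
  have "(\<integral> zs. wfun y \<epsilon> (zs j) \<partial>PiM {..<n} (\<lambda>_. lik \<theta>)) = h \<theta>" if "j < n" for j
  proof -
    have "(\<integral> zs. wfun y \<epsilon> (zs j) \<partial>PiM {..<n} (\<lambda>_. lik \<theta>))
        = (\<integral> z. wfun y \<epsilon> z \<partial>distr (PiM {..<n} (\<lambda>_. lik \<theta>)) (lik \<theta>) (\<lambda>zs. zs j))"
      using that by (intro integral_distr[symmetric]) auto
    then show ?thesis using PiM_component[of j] that integral_wfun_lik by simp
  qed
  with \<open>\<And>j. j < n \<Longrightarrow> integrable _ _\<close>
  show "(\<integral> zs. hits n zs \<partial>PiM {..<n} (\<lambda>_. lik \<theta>)) = real n * h \<theta>"
    by (simp add: Bochner_Integration.integral_sum)
qed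

abbreviation "ratio \<theta> t xs zs \<equiv>
  min 1 ((cfun p q t \<theta> * hits N zs) / (cfun p q \<theta> t * (1 + hits (N - 1) xs)))"

lemma hits_nonneg: "0 \<le> hits n zs"
  by (intro sum_nonneg) (simp add: wfun_def)

lemma cfun_nonneg: "0 \<le> cfun p q \<theta> t"
  by (simp add: cfun_def p_nonneg q_nonneg)

lemma ratio_nonneg: "0 \<le> ratio \<theta> t xs zs"
  using cfun_nonneg hits_nonneg
  by (intro min.boundedI divide_nonneg_nonneg mult_nonneg_nonneg add_nonneg_nonneg) auto

lemma ratio_le_hits: "ratio \<theta> t xs zs \<le> hits N zs"
proof (cases "hits N zs = 0")
  case False
  then obtain j where j: "j < N" "wfun y \<epsilon> (zs j) \<noteq> 0"
    by (metis (no_types, lifting) lessThan_iff sum.neutral)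
  then have "wfun y \<epsilon> (zs j) = 1" by (simp add: wfun_def indicator_def split: if_splits)
  moreover have "wfun y \<epsilon> (zs j) \<le> hits N zs"
    using j by (intro member_le_sum) (auto simp: wfun_def)
  ultimately show ?thesis by linarith
qed simp

lemma ratio_le_reverse: "ratio \<theta> t xs zs \<le> (cfun p q t \<theta> / cfun p q \<theta> t) * hits N zs"
proof -
  have "(cfun p q t \<theta> * hits N zs) / (cfun p q \<theta> t * (1 + hits (N - 1) xs))
      \<le> (cfun p q t \<theta> * hits N zs) / cfun p q \<theta> t"
    using cfun_nonneg[of \<theta> t] cfun_nonneg[of t \<theta>] hits_nonneg[of zs N] hits_nonneg[of xs "N - 1"]
    by (cases "cfun p q \<theta> t = 0") (auto intro!: divide_left_mono mult_nonneg_nonneg)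
  then show ?thesis by (simp add: min.coboundedI2)
qed

lemma alpha_nonneg: "0 \<le> \<alpha> \<theta> t"
  unfolding alpha2N_def using ratio_nonneg by (intro integral_nonneg_AE AE_I2) auto

lemma alpha_le_hits_bound:
  assumes "0 \<le> c" "\<And>xs zs. ratio \<theta> t xs zs \<le> c * hits N zs"
  shows "\<alpha> \<theta> t \<le> c * (real N * h t)"
proof -
  have "\<alpha> \<theta> t \<le> (\<integral> zs. c * hits N zs \<partial>PiM {..<N} (\<lambda>_. lik t))"
    unfolding alpha2N_def using expected_hits[of N t] assms h_nonneg[of t]
    by (intro iterated_integral_le_of_bound prob_space_PiM_lik) auto
  then show ?thesis by (simp add: expected_hits)
qed

lemma alpha_le_1: "\<alpha> \<theta> t \<le> 1"
proof -
  interpret prob_space "PiM {..<N} (\<lambda>_. lik t)" by (rule prob_space_PiM_lik)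
  have "\<alpha> \<theta> t \<le> (\<integral> zs. 1 \<partial>PiM {..<N} (\<lambda>_. lik t))"
    unfolding alpha2N_def by (intro iterated_integral_le_of_bound prob_space_PiM_lik) auto
  then show ?thesis by (simp add: prob_space)
qed

text \<open>The three terms come from \<open>\<alpha> \<le> 1\<close>, \<open>\<alpha> \<le> E[hits] = N h(t)\<close> and
  \<open>\<alpha> \<le> c(t,\<theta>) / c(\<theta>,t) \<cdot> N h(t)\<close>; the last makes \<open>post_density_balance\<close> hold. If \<open>p \<theta> = 0\<close>
  it is \<open>0\<close> by \<open>x / 0 = 0\<close>, consistent with \<open>\<alpha> \<theta> t = 0\<close> there.\<close>
definition acceptance_bound :: "'a \<Rightarrow> 'a \<Rightarrow> real" where
  "acceptance_bound \<theta> t =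
     min (q \<theta> t) (min (q \<theta> t * (real N * h t)) (real N * p t * q t \<theta> * h t / p \<theta>))"

lemma acceptance_le_bound: "q \<theta> t * \<alpha> \<theta> t \<le> acceptance_bound \<theta> t"
proof -
  have "q \<theta> t * \<alpha> \<theta> t \<le> real N * p t * q t \<theta> * h t / p \<theta>"
  proof (cases "q \<theta> t = 0 \<or> p \<theta> = 0")
    case True
    have "\<alpha> \<theta> t \<le> 0" if "p \<theta> = 0"
      using alpha_le_hits_bound[where c=0 and \<theta>=\<theta> and t=t] that by (simp add: cfun_def)
    then have "q \<theta> t * \<alpha> \<theta> t \<le> 0"
      using True q_nonneg[of \<theta> t] by (auto simp: mult_nonneg_nonpos)
    moreover have "0 \<le> real N * p t * q t \<theta> * h t / p \<theta>"
      using q_nonneg p_nonneg h_nonneg by simp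
    ultimately show ?thesis by linarith
  next
    case False
    then have "0 < q \<theta> t" "0 < p \<theta>" using q_nonneg[of \<theta> t] p_nonneg[of \<theta>] by auto
    have "\<alpha> \<theta> t \<le> (cfun p q t \<theta> / cfun p q \<theta> t) * (real N * h t)"
      by (intro alpha_le_hits_bound ratio_le_reverse divide_nonneg_nonneg cfun_nonneg)
    then have "q \<theta> t * \<alpha> \<theta> t \<le> q \<theta> t * ((cfun p q t \<theta> / cfun p q \<theta> t) * (real N * h t))"
      using \<open>0 < q \<theta> t\<close> by (intro mult_left_mono) auto
    also have "\<dots> = real N * p t * q t \<theta> * h t / p \<theta>"
      using \<open>0 < q \<theta> t\<close> \<open>0 < p \<theta>\<close> by (simp add: cfun_def field_simps)
    finally show ?thesis .
  qed
  moreover have "q \<theta> t * \<alpha> \<theta> t \<le> q \<theta> t" "q \<theta> t * \<alpha> \<theta> t \<le> q \<theta> t * (real N * h t)"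
    using alpha_le_1[of \<theta> t] alpha_le_hits_bound[where c=1 and \<theta>=\<theta> and t=t] ratio_le_hits q_nonneg[of \<theta> t]
    by (auto intro: mult_left_le mult_left_mono)
  ultimately show ?thesis by (simp add: acceptance_bound_def)
qed

lemma acceptance_bound_measurable [measurable]:
  "(\<lambda>(\<theta>, t). acceptance_bound \<theta> t) \<in> borel_measurable (\<mu> \<Otimes>\<^sub>M \<mu>)"
proof -
  have [measurable]: "(\<lambda>x. q (snd x) (fst x)) \<in> borel_measurable (\<mu> \<Otimes>\<^sub>M \<mu>)"
    using measurable_compose[OF measurable_pair_swap' q_meas] by (simp add: case_prod_beta')
  show ?thesis unfolding acceptance_bound_def case_prod_beta' by measurable
qed

lemma acceptance_bound_mass_le_1: "(\<integral>\<^sup>+ t. ennreal (acceptance_bound \<theta> t) \<partial>\<mu>) \<le> 1"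
proof -
  have "(\<integral>\<^sup>+ t. ennreal (acceptance_bound \<theta> t) \<partial>\<mu>) \<le> (\<integral>\<^sup>+ t. ennreal (q \<theta> t) \<partial>\<mu>)"
    by (intro nn_integral_mono ennreal_leI) (simp add: acceptance_bound_def)
  then show ?thesis using q_dens by simp
qed

definition post_density :: "'a \<Rightarrow> real" where
  "post_density \<theta> = p \<theta> * h \<theta> / enn2real (Hconst \<mu> p \<nu> f y \<epsilon>)"

lemma H_real_pos: "0 < enn2real (Hconst \<mu> p \<nu> f y \<epsilon>)"
  using H_pos H_fin by (simp add: enn2real_positive_iff)

lemma post_density_nonneg: "0 \<le> post_density \<theta>"
  unfolding post_density_def using p_nonneg h_nonneg H_real_pos by simp

lemma post_density_measurable [measurable]: "post_density \<in> borel_measurable \<mu>"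
  unfolding post_density_def by measurable

lemma post_eq_density: "\<pi> = density \<mu> post_density"
  by (simp add: post_def post_density_def)

lemma prob_space_post: "prob_space \<pi>"
proof (rule prob_spaceI)
  let ?H = "enn2real (Hconst \<mu> p \<nu> f y \<epsilon>)"
  have "emeasure \<pi> (space \<pi>) = emeasure (density \<mu> post_density) UNIV"
    by (simp add: post_eq_density)
  also have "\<dots> = (\<integral>\<^sup>+ \<theta>. ennreal (post_density \<theta>) * indicator UNIV \<theta> \<partial>\<mu>)"
    by (rule emeasure_density) (simp_all add: sets_mu)
  also have "\<dots> = (\<integral>\<^sup>+ \<theta>. ennreal (p \<theta> * h \<theta>) * ennreal (1 / ?H) \<partial>\<mu>)"
    using H_real_pos by (simp add: post_density_def ennreal_mult''[symmetric])
  also have "\<dots> = ennreal ?H * ennreal (1 / ?H)"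
    using H_fin by (simp add: nn_integral_multc Hconst_def)
  also have "\<dots> = 1" using H_real_pos by (simp flip: ennreal_mult)
  finally show "emeasure \<pi> (space \<pi>) = 1" .
qed

lemma post_density_balance:
  "post_density \<theta> * acceptance_bound \<theta> t \<le> real N * post_density t * q t \<theta>"
proof (cases "p \<theta> = 0")
  case False
  then have "0 < p \<theta>" using p_nonneg[of \<theta>] by simp
  have "post_density \<theta> * acceptance_bound \<theta> t \<le> post_density \<theta> * (real N * p t * q t \<theta> * h t / p \<theta>)"
    using post_density_nonneg by (intro mult_left_mono) (auto simp: acceptance_bound_def)
  also have "\<dots> = h \<theta> * (real N * post_density t * q t \<theta>)"
    using \<open>0 < p \<theta>\<close> H_real_pos by (simp add: post_density_def field_simps)
  also have "\<dots> \<le> real N * post_density t * q t \<theta>"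
    using h_le_1 h_nonneg post_density_nonneg q_nonneg by (intro mult_left_le_one_le) auto
  finally show ?thesis .
qed (use post_density_nonneg[of t] q_nonneg[of t \<theta>] in \<open>simp add: post_density_def[of \<theta>]\<close>)

lemma acceptance_nonneg: "0 \<le> q \<theta> t * \<alpha> \<theta> t"
  using q_nonneg alpha_nonneg by simp

sublocale dominated_mh \<mu> q \<alpha> acceptance_bound post_density "real N"
  by (rule dominated_mh.intro) (fact sf_mu q_meas q_nonneg q_dens acceptance_bound_measurable acceptance_nonneg
      acceptance_le_bound acceptance_bound_mass_le_1 post_density_measurable post_density_nonneg
      of_nat_0_le_iff post_density_balance)+

lemma mass_le_local_proposal_mass:
  assumes "0 \<le> \<eta>" and far: "\<And>t. t \<notin> ball \<theta>0 v \<Longrightarrow> real N * h t \<le> \<eta>"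
  shows "(\<integral>\<^sup>+ t. ennreal (acceptance_bound \<theta> t) \<partial>\<mu>)
    \<le> (\<integral>\<^sup>+ t \<in> ball \<theta>0 v. ennreal (q \<theta> t) \<partial>\<mu>) + ennreal \<eta>"
proof -
  have "ennreal (acceptance_bound \<theta> t)
      \<le> ennreal (q \<theta> t) * indicator (ball \<theta>0 v) t + ennreal \<eta> * ennreal (q \<theta> t)" for t
  proof (cases "t \<in> ball \<theta>0 v")
    case True
    then show ?thesis
      by (simp add: acceptance_bound_def ennreal_leI add_increasing2)
  next
    case False
    have "acceptance_bound \<theta> t \<le> q \<theta> t * (real N * h t)"
      by (simp add: acceptance_bound_def)
    also have "\<dots> \<le> \<eta> * q \<theta> t"
      using mult_left_mono[OF far[OF False] q_nonneg[of \<theta> t]] by (simp add: mult.commute)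
    finally show ?thesis
      using False \<open>0 \<le> \<eta>\<close> by (simp add: ennreal_leI ennreal_mult'[symmetric])
  qed
  then have "(\<integral>\<^sup>+ t. ennreal (acceptance_bound \<theta> t) \<partial>\<mu>)
      \<le> (\<integral>\<^sup>+ t. ennreal (q \<theta> t) * indicator (ball \<theta>0 v) t + ennreal \<eta> * ennreal (q \<theta> t) \<partial>\<mu>)"
    by (intro nn_integral_mono)
  also have "\<dots> = (\<integral>\<^sup>+ t \<in> ball \<theta>0 v. ennreal (q \<theta> t) \<partial>\<mu>) + ennreal \<eta>"
    by (simp add: nn_integral_add nn_integral_cmult q_dens)
  finally show ?thesis .
qed

lemma h_small_far_away:
  assumes h_tails: "\<And>\<delta>. \<delta> > 0 \<Longrightarrow> \<exists>v>0. (SUP \<theta>\<in>- ball \<theta>0 v. h \<theta>) < \<delta>" and "\<eta> > 0"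
  shows "\<exists>v>0. \<forall>t. t \<notin> ball \<theta>0 v \<longrightarrow> real N * h t \<le> \<eta>"
proof -
  obtain v where "v > 0" and v: "(SUP \<theta>\<in>- ball \<theta>0 v. h \<theta>) < \<eta> / (real N + 1)"
    using h_tails[of "\<eta> / (real N + 1)"] \<open>\<eta> > 0\<close> by auto
  have "real N * h t \<le> \<eta>" if "t \<notin> ball \<theta>0 v" for t
  proof -
    have "h t \<le> (SUP \<theta>\<in>- ball \<theta>0 v. h \<theta>)"
      using that h_le_1 by (intro cSUP_upper bdd_aboveI2) auto
    then have "(real N + 1) * h t \<le> (real N + 1) * (SUP \<theta>\<in>- ball \<theta>0 v. h \<theta>)"
      by (intro mult_left_mono) auto
    also have "\<dots> < \<eta>"
      using v by (simp add: field_simps)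
    finally have "(real N + 1) * h t \<le> \<eta>" by simp
    then show ?thesis using h_nonneg[of t] by (simp add: algebra_simps)
  qed
  with \<open>v > 0\<close> show ?thesis by blast
qed

lemma local_proposal_mass_small:
  assumes "Q0 \<mu> \<theta>0 q" "v > 0" "\<delta> > 0"
  shows "\<exists>R>0. \<forall>\<theta>\<in>- ball \<theta>0 R. (\<integral>\<^sup>+ t \<in> ball \<theta>0 v. ennreal (q \<theta> t) \<partial>\<mu>) < ennreal \<delta>"
proof -
  from assms(1)[unfolded Q0_def, rule_format, OF assms(3,2)]
  obtain R where "R > 0" and R: "\<And>\<theta>. \<theta> \<in> - ball \<theta>0 R
      \<Longrightarrow> enn2real (\<integral>\<^sup>+ t \<in> ball \<theta>0 v. ennreal (q \<theta> t) \<partial>\<mu>) < \<delta>"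
    by blast
  have "(\<integral>\<^sup>+ t \<in> ball \<theta>0 v. ennreal (q \<theta> t) \<partial>\<mu>) < ennreal \<delta>" if "\<theta> \<in> - ball \<theta>0 R" for \<theta>
  proof -
    have "(\<integral>\<^sup>+ t \<in> ball \<theta>0 v. ennreal (q \<theta> t) \<partial>\<mu>) \<le> (\<integral>\<^sup>+ t. ennreal (q \<theta> t) \<partial>\<mu>)"
      by (intro nn_integral_mono) (auto simp: indicator_def)
    then have "(\<integral>\<^sup>+ t \<in> ball \<theta>0 v. ennreal (q \<theta> t) \<partial>\<mu>)
        = ennreal (enn2real (\<integral>\<^sup>+ t \<in> ball \<theta>0 v. ennreal (q \<theta> t) \<partial>\<mu>))"
      using q_dens[of \<theta>] by (simp add: le_less_trans)
    also have "\<dots> < ennreal \<delta>"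
      using R[OF that] \<open>\<delta> > 0\<close> by (subst ennreal_less_iff) auto
    finally show ?thesis .
  qed
  with \<open>R > 0\<close> show ?thesis by blast
qed

lemma mass_vanishes_at_infinity:
  assumes "Q0 \<mu> \<theta>0 q" "\<delta> > 0"
    and h_tails: "\<And>\<delta>. \<delta> > 0 \<Longrightarrow> \<exists>v>0. (SUP \<theta>\<in>- ball \<theta>0 v. h \<theta>) < \<delta>"
  shows "\<exists>R>0. \<forall>\<theta>\<in>- ball \<theta>0 R. (\<integral>\<^sup>+ t. ennreal (acceptance_bound \<theta> t) \<partial>\<mu>) < ennreal \<delta>"
proof -
  have "\<delta> / 2 > 0" using assms(2) by simp
  then obtain v where "v > 0" and far: "\<And>t. t \<notin> ball \<theta>0 v \<Longrightarrow> real N * h t \<le> \<delta> / 2"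
    using h_small_far_away[OF h_tails] by blast
  obtain R where "R > 0" and R: "\<And>\<theta>. \<theta> \<in> - ball \<theta>0 R
      \<Longrightarrow> (\<integral>\<^sup>+ t \<in> ball \<theta>0 v. ennreal (q \<theta> t) \<partial>\<mu>) < ennreal (\<delta> / 2)"
    using local_proposal_mass_small[OF assms(1) \<open>v > 0\<close> \<open>\<delta> / 2 > 0\<close>] by blast
  have "(\<integral>\<^sup>+ t. ennreal (acceptance_bound \<theta> t) \<partial>\<mu>) < ennreal \<delta>" if "\<theta> \<in> - ball \<theta>0 R" for \<theta>
  proof -
    have "(\<integral>\<^sup>+ t. ennreal (acceptance_bound \<theta> t) \<partial>\<mu>)
        \<le> (\<integral>\<^sup>+ t \<in> ball \<theta>0 v. ennreal (q \<theta> t) \<partial>\<mu>) + ennreal (\<delta> / 2)"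
      using far \<open>\<delta> / 2 > 0\<close> by (intro mass_le_local_proposal_mass) auto
    also have "\<dots> < ennreal (\<delta> / 2) + ennreal (\<delta> / 2)"
      using R[OF that] by (simp add: ennreal_add_left_cancel_less)
    also have "\<dots> = ennreal \<delta>"
      using assms(2) by (simp flip: ennreal_plus)
    finally show ?thesis .
  qed
  with \<open>R > 0\<close> show ?thesis by blast
qed

theorem not_variance_bounding:
  assumes "Q0 \<mu> \<theta>0 q"
    and pi_tails: "\<And>r. r > 0 \<Longrightarrow> emeasure \<pi> (- ball \<theta>0 r) > 0"
    and h_tails: "\<And>\<delta>. \<delta> > 0 \<Longrightarrow> \<exists>v>0. (SUP \<theta>\<in>- ball \<theta>0 v. h \<theta>) < \<delta>"
  shows "\<not> variance_bounding \<pi> (P2N_op \<mu> \<nu> f p q y \<epsilon> N)"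
proof -
  let ?mass = "\<lambda>\<theta>. \<integral>\<^sup>+ t. ennreal (acceptance_bound \<theta> t) \<partial>\<mu>"
  interpret post: prob_space \<pi> by (rule prob_space_post)
  have sets_post: "sets \<pi> = sets borel" by (simp add: post_eq_density sets_mu)
  have "\<forall>k. \<exists>R>0. \<forall>\<theta>\<in>- ball \<theta>0 R. ?mass \<theta> < ennreal ((1/2)^k)"
    using mass_vanishes_at_infinity[OF assms(1) _ h_tails] by simp
  then obtain T where T: "\<And>k. T k > 0" "\<And>k \<theta>. \<theta> \<in> - ball \<theta>0 (T k) \<Longrightarrow> ?mass \<theta> < ennreal ((1/2)^k)"
    by metis
  have pos: "emeasure \<pi> (space \<pi>) > 0" by (simp add: post.emeasure_space_1)
  obtain R and E :: "nat \<Rightarrow> 'a set" where "R > 0" "emeasure \<pi> (ball \<theta>0 R) > 0" "disjoint_family E"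
    "\<And>k. E k \<in> sets \<pi>" "\<And>k. emeasure \<pi> (E k) > 0" "\<And>k. E k \<inter> ball \<theta>0 R = {}"
    and far: "\<And>k. E k \<inter> ball \<theta>0 (T k) = {}"
    using exists_disjoint_tail_annuli[where T=T, OF sets_post pos pi_tails T(1)] by metis
  moreover have "?mass \<theta> \<le> ennreal ((1/2)^k)" if "\<theta> \<in> E k" for \<theta> k
    using T(2)[of \<theta> k] far[of k] that by (simp add: disjoint_iff less_imp_le)
  moreover have "ball \<theta>0 R \<in> sets \<pi>" by (simp add: sets_post)
  ultimately have "\<exists>g\<in>L2_0 \<pi>. (\<integral>\<^sup>+ \<theta>. ennreal ((g \<theta>)\<^sup>2) / ?mass \<theta> \<partial>\<pi>) = \<infinity>"
    using post.exists_L2_0_weighted_infinite[of "ball \<theta>0 R" E ?mass]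
    by (simp add: post.emeasure_eq_measure)
  then obtain g where g: "g \<in> L2_0 \<pi>" "(\<integral>\<^sup>+ \<theta>. ennreal ((g \<theta>)\<^sup>2) / ?mass \<theta> \<partial>\<pi>) = \<infinity>"
    by blast
  have "(\<integral>\<^sup>+ \<theta>. ennreal ((g' \<theta>)\<^sup>2) / ?mass \<theta> \<partial>\<pi>) < \<infinity>"
    if "u \<in> L2_0 \<pi>" "AE \<theta> in \<pi>. P2N_op \<mu> \<nu> f p q y \<epsilon> N u \<theta> - u \<theta> = g' \<theta>" for u g'
    using that unfolding P2N_op_def post_eq_density by (rule weighted_range_finite)
  then show ?thesis using g by (rule not_variance_bounding_if_weighted_range)
qed

end

theorem proposition4:
  fixes \<mu> :: "'a::metric_space measure" and \<nu> :: "'b::metric_space measure"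
    and p :: "'a \<Rightarrow> real" and f :: "'a \<Rightarrow> 'b \<Rightarrow> real" and q :: "'a \<Rightarrow> 'a \<Rightarrow> real"
    and y :: 'b and \<epsilon> :: real and \<theta>0 :: 'a and N :: nat
  assumes sets_mu: "sets \<mu> = sets borel" and sf_mu: "sigma_finite_measure \<mu>"
    and sets_nu: "sets \<nu> = sets borel" and sf_nu: "sigma_finite_measure \<nu>"
    and eps: "\<epsilon> > 0"
    and p_meas: "p \<in> borel_measurable \<mu>" and p_nonneg: "\<And>\<theta>. p \<theta> \<ge> 0"
    and f_meas: "(\<lambda>(\<theta>, x). f \<theta> x) \<in> borel_measurable (\<mu> \<Otimes>\<^sub>M \<nu>)"
    and f_nonneg: "\<And>\<theta> x. f \<theta> x \<ge> 0"
    and f_dens: "\<And>\<theta>. (\<integral>\<^sup>+ x. ennreal (f \<theta> x) \<partial>\<nu>) = 1"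
    and q_meas: "(\<lambda>(\<theta>, t). q \<theta> t) \<in> borel_measurable (\<mu> \<Otimes>\<^sub>M \<mu>)"
    and q_nonneg: "\<And>\<theta> t. q \<theta> t \<ge> 0"
    and q_dens: "\<And>\<theta>. (\<integral>\<^sup>+ t. ennreal (q \<theta> t) \<partial>\<mu>) = 1"
    and H_pos: "0 < Hconst \<mu> p \<nu> f y \<epsilon>" and H_fin: "Hconst \<mu> p \<nu> f y \<epsilon> < \<infinity>"
    and q_Q0: "Q0 \<mu> \<theta>0 q"
    and pi_tails: "\<And>r. r > 0 \<Longrightarrow> emeasure (post \<mu> p \<nu> f y \<epsilon>) (- ball \<theta>0 r) > 0"
    and h_tails: "\<And>\<delta>. \<delta> > 0 \<Longrightarrow> \<exists>v>0. (SUP \<theta>\<in>- ball \<theta>0 v. hfun \<nu> f y \<epsilon> \<theta>) < \<delta>"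
    and N_pos: "N \<ge> 1"
  shows "\<not> variance_bounding (post \<mu> p \<nu> f y \<epsilon>) (P2N_op \<mu> \<nu> f p q y \<epsilon> N)"
proof -
  interpret abc_mh \<mu> \<nu> p f q y \<epsilon> N
    by (rule abc_mh.intro) (fact sets_mu sf_mu sets_nu sf_nu p_meas p_nonneg f_meas f_dens
        q_meas q_nonneg q_dens H_pos H_fin)+
  show ?thesis
    using q_Q0 pi_tails h_tails by (rule not_variance_bounding)
qed

end
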